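(* Let $[X,A]$ be a Banach space with an $i$-operator. Then $A\oplus(-A)$, $(x_1,x_2)\mapsto(Ax_1,-Ax_2)$, is an $i$-operator on $X\oplus X$ (normed e.g. by $\|(x_1,x_2)\|=\|x_1\|+\|x_2\|$), and in the category of Banach spaces with an $i$-operator $[X\oplus X,A\oplus -A]\simeq[X\oplus X,N_X]$.
   Context: A Banach space with an $i$-operator is a pair $[X,A]$ with $X$ a real Banach space and $A:X\to X$ bounded linear with $A^2=-I_X$ and $\|\alpha x+\beta Ax\|=\|x\|$ for all real $\alpha,\beta$ with $\alpha^2+\beta^2=1$. Two such spaces $[X,A]$, $[Y,B]$ are isomorphic ($\simeq$) if there is a bounded linear bijection $T:X\to Y$ with $TA=BT$. $N_X(x_1,x_2)=(-x_2,x_1)$, and $[X\oplus X,N_X]$ is the complexification of $X$, with norm $\|(x_1,x_2)\|=\left(\frac1{2\pi}\int_{-\pi}^{\pi}\|x_1\cos\phi+x_2\sin\phi\|^2d\phi\right)^{1/2}$. *)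

theory Defs
  imports "HOL-Analysis.Analysis"
begin

definition i_operator :: "('v::real_vector \<Rightarrow> real) \<Rightarrow> ('v \<Rightarrow> 'v) \<Rightarrow> bool" where
  "i_operator nrm A \<longleftrightarrow>
     linear A \<and> (\<exists>K. \<forall>x. nrm (A x) \<le> K * nrm x) \<and> (\<forall>x. A (A x) = - x) \<and>
     (\<forall>\<alpha> \<beta> x. \<alpha>\<^sup>2 + \<beta>\<^sup>2 = 1 \<longrightarrow> nrm (\<alpha> *\<^sub>R x + \<beta> *\<^sub>R A x) = nrm x)"

definition i_iso :: "('v::real_vector \<Rightarrow> real) \<Rightarrow> ('v \<Rightarrow> 'v) \<Rightarrow>
                     ('w::real_vector \<Rightarrow> real) \<Rightarrow> ('w \<Rightarrow> 'w) \<Rightarrow> bool" where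
  "i_iso nrm1 A nrm2 B \<longleftrightarrow>
     (\<exists>T. linear T \<and> bij T \<and> (\<exists>K. \<forall>x. nrm2 (T x) \<le> K * nrm1 x) \<and> (\<forall>x. T (A x) = B (T x)))"

definition sum_norm :: "'a::real_normed_vector \<times> 'a \<Rightarrow> real" where
  "sum_norm p = norm (fst p) + norm (snd p)"

definition cplx_norm :: "'a::real_normed_vector \<times> 'a \<Rightarrow> real" where
  "cplx_norm p = sqrt ((1 / (2 * pi)) *
      integral {-pi..pi} (\<lambda>\<phi>. (norm (cos \<phi> *\<^sub>R fst p + sin \<phi> *\<^sub>R snd p))\<^sup>2))"

definition N_op :: "'a::real_vector \<times> 'a \<Rightarrow> 'a \<times> 'a" where
  "N_op p = (- snd p, fst p)"

definition diag_op :: "('a::real_vector \<Rightarrow> 'a) \<Rightarrow> 'a \<times> 'a \<Rightarrow> 'a \<times> 'a" where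
  "diag_op A p = (A (fst p), - A (snd p))"

end

theory Submission
  imports Defs
begin

text \<open>The map \<open>T (x\<^sub>1, x\<^sub>2) = (x\<^sub>1 + x\<^sub>2, A x\<^sub>2 - A x\<^sub>1)\<close> intertwines \<open>A \<oplus> -A\<close> with \<open>N\<^sub>X\<close>, and
  \<open>(y\<^sub>1, y\<^sub>2) \<mapsto> \<onehalf>(y\<^sub>1 + A y\<^sub>2, y\<^sub>1 - A y\<^sub>2)\<close> is its inverse because \<open>A\<^sup>2 = -I\<close>.  It is bounded
  since \<open>A\<close> is an isometry and the complexification norm is dominated by the sum norm,
  the integrand \<open>\<parallel>x\<^sub>1 cos \<phi> + x\<^sub>2 sin \<phi>\<parallel>\<^sup>2\<close> being at most \<open>(\<parallel>x\<^sub>1\<parallel> + \<parallel>x\<^sub>2\<parallel>)\<^sup>2\<close>.\<close>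

lemma i_operator_norm_eq:
  assumes "i_operator norm A"
  shows "norm (A x) = norm x"
  using assms unfolding i_operator_def by (metis add_0 power2_eq_1_iff scaleR_one scaleR_zero_left zero_power2)

lemma cplx_norm_le_sum_norm:
  fixes p :: "'a::real_normed_vector \<times> 'a"
  shows "cplx_norm p \<le> sum_norm p"
proof -
  obtain a b where p: "p = (a, b)" by fastforce
  let ?f = "\<lambda>\<phi>. (norm (cos \<phi> *\<^sub>R a + sin \<phi> *\<^sub>R b))\<^sup>2"
  have "?f integrable_on {-pi..pi}"
    by (intro integrable_continuous_interval continuous_intros)
  moreover have "?f \<phi> \<le> (norm a + norm b)\<^sup>2" for \<phi>
  proof -
    have "norm (cos \<phi> *\<^sub>R a + sin \<phi> *\<^sub>R b) \<le> \<bar>cos \<phi>\<bar> * norm a + \<bar>sin \<phi>\<bar> * norm b"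
      by (metis norm_scaleR norm_triangle_ineq)
    also have "\<dots> \<le> norm a + norm b"
      by (intro add_mono mult_left_le_one_le) auto
    finally show ?thesis by (intro power_mono) auto
  qed
  ultimately have "integral {-pi..pi} ?f \<le> integral {-pi..pi} (\<lambda>_. (norm a + norm b)\<^sup>2)"
    by (intro integral_le) auto
  then have "(1 / (2 * pi)) * integral {-pi..pi} ?f \<le> (norm a + norm b)\<^sup>2"
    by (simp add: field_simps)
  then have "sqrt ((1 / (2 * pi)) * integral {-pi..pi} ?f) \<le> norm a + norm b"
    by (simp add: real_le_lsqrt)
  then show ?thesis by (simp add: p cplx_norm_def sum_norm_def)
qed

lemma i_operator_diag_op:
  fixes A :: "'a::real_normed_vector \<Rightarrow> 'a"
  assumes "i_operator norm A"
  shows "i_operator sum_norm (diag_op A)"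
  unfolding i_operator_def
proof (intro conjI allI impI)
  have lin: "linear A" and AA: "\<And>x. A (A x) = - x"
    and circ: "\<And>\<alpha> \<beta> x. \<alpha>\<^sup>2 + \<beta>\<^sup>2 = 1 \<Longrightarrow> norm (\<alpha> *\<^sub>R x + \<beta> *\<^sub>R A x) = norm x"
    using assms unfolding i_operator_def by auto
  show "linear (diag_op A)"
    by (rule linearI) (auto simp: diag_op_def linear_add[OF lin] linear_scale[OF lin])
  show "\<exists>K. \<forall>x. sum_norm (diag_op A x) \<le> K * sum_norm x"
    by (rule exI[of _ 1]) (simp add: sum_norm_def diag_op_def i_operator_norm_eq[OF assms])
  show "diag_op A (diag_op A x) = - x" for x
    by (simp add: diag_op_def AA linear_neg[OF lin] prod_eq_iff)
  fix \<alpha> \<beta> :: real and x :: "'a \<times> 'a"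
  assume h: "\<alpha>\<^sup>2 + \<beta>\<^sup>2 = 1"
  then have "norm (\<alpha> *\<^sub>R snd x + (- \<beta>) *\<^sub>R A (snd x)) = norm (snd x)"
    by (intro circ) simp
  then show "sum_norm (\<alpha> *\<^sub>R x + \<beta> *\<^sub>R diag_op A x) = sum_norm x"
    using circ[OF h, of "fst x"] by (simp add: sum_norm_def diag_op_def)
qed

definition diag_to_N :: "('a::real_vector \<Rightarrow> 'a) \<Rightarrow> 'a \<times> 'a \<Rightarrow> 'a \<times> 'a" where
  "diag_to_N A p = (fst p + snd p, A (snd p) - A (fst p))"

lemma linear_diag_to_N:
  assumes "linear A"
  shows "linear (diag_to_N A)"
  by (rule linearI) (auto simp: diag_to_N_def linear_add[OF assms] linear_scale[OF assms] algebra_simps)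

lemma diag_to_N_diag_op:
  assumes "linear A" and "\<And>x. A (A x) = - x"
  shows "diag_to_N A (diag_op A p) = N_op (diag_to_N A p)"
  by (simp add: diag_to_N_def diag_op_def N_op_def assms linear_neg[OF assms(1)])

lemma bij_diag_to_N:
  fixes A :: "'a::real_vector \<Rightarrow> 'a"
  assumes lin: "linear A" and AA: "\<And>x. A (A x) = - x"
  shows "bij (diag_to_N A)"
proof -
  define S where "S p = ((1/2) *\<^sub>R (fst p + A (snd p)), (1/2) *\<^sub>R (fst p - A (snd p)))" for p
  have half: "(1/2::real) *\<^sub>R x + (1/2::real) *\<^sub>R x = x" for x :: 'a
    by (simp add: scaleR_add_left[symmetric])
  note A_simps = linear_add[OF lin] linear_diff[OF lin] linear_scale[OF lin] AA
  have "diag_to_N A (S p) = p" for p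
    by (simp add: diag_to_N_def S_def A_simps prod_eq_iff algebra_simps half)
  moreover have "S (diag_to_N A p) = p" for p
    by (simp add: diag_to_N_def S_def A_simps prod_eq_iff algebra_simps half)
  ultimately show ?thesis
    by (metis bij_def inj_def surj_def)
qed

lemma sum_norm_diag_to_N_le:
  assumes "i_operator norm A"
  shows "sum_norm (diag_to_N A p) \<le> 2 * sum_norm p"
proof -
  have "norm (A (snd p) - A (fst p)) \<le> norm (snd p) + norm (fst p)"
    using norm_triangle_ineq4 i_operator_norm_eq[OF assms] by metis
  moreover have "norm (fst p + snd p) \<le> norm (fst p) + norm (snd p)"
    by (rule norm_triangle_ineq)
  ultimately show ?thesis
    by (simp add: diag_to_N_def sum_norm_def)
qed

theorem proposition3:
  fixes A :: "'a::banach \<Rightarrow> 'a"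
  assumes "i_operator norm A"
  shows "i_operator (sum_norm :: 'a \<times> 'a \<Rightarrow> real) (diag_op A)
         \<and> i_iso (sum_norm :: 'a \<times> 'a \<Rightarrow> real) (diag_op A) (cplx_norm :: 'a \<times> 'a \<Rightarrow> real) N_op"
proof
  show "i_operator sum_norm (diag_op A)"
    using assms by (rule i_operator_diag_op)
  have lin: "linear A" and AA: "\<And>x. A (A x) = - x"
    using assms unfolding i_operator_def by auto
  have "cplx_norm (diag_to_N A p) \<le> 2 * sum_norm p" for p :: "'a \<times> 'a"
    using cplx_norm_le_sum_norm sum_norm_diag_to_N_le[OF assms] order_trans by blast
  then show "i_iso sum_norm (diag_op A) (cplx_norm :: 'a \<times> 'a \<Rightarrow> real) N_op"
    unfolding i_iso_def
    using linear_diag_to_N[OF lin] bij_diag_to_N[OF lin AA] diag_to_N_diag_op[OF lin AA]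
    by blast
qed

end
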